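(* Let $P$ and $P'$ be strictly convex closed polyhedra in $\mathbb{R}^3$ with the same combinatorial structure (with a fixed combinatorial equivalence), such that corresponding faces are affine-equivalent. Suppose there is an edge path $\gamma$ on $P$ such that (i) each vertex of $\gamma$ is incident to exactly three edges of $P$, and (ii) every face of $P$ is incident to at least one vertex of $\gamma$. Then $P$ and $P'$ are affine-equivalent.
   Context: A polyhedron is a connected two-dimensional polyhedral surface in $\mathbb{R}^3$ composed of finitely many convex polygons (its faces). A closed convex polyhedron is strictly convex if none of its dihedral angles equals $\pi$. Two polyhedra have the same combinatorial structure (are combinatorially equivalent) if there is an incidence-preserving bijection between their vertices, edges and faces. Two corresponding polygons (resp. polyhedra) are affine-equivalent if there is a nondegenerate affine map carrying the first onto the second and carrying each vertex, edge (and face) to the corresponding one under the fixed correspondence. An edge path is a sequence of vertices in which consecutive vertices are joined by edges of $P$. *)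

theory Defs
  imports "HOL-Analysis.Analysis"
begin

text \<open>A strictly convex closed polyhedron is represented by the solid convex body K it
bounds: a polytope in R^3 with nonempty interior (aff_dim 3).
Since faces are taken as the genuine faces of the polytope, no dihedral angle equals pi,
i.e. the polyhedron is strictly convex.\<close>

definition closed_convex_polyhedron :: "(real^3) set \<Rightarrow> bool" where
  "closed_convex_polyhedron K \<longleftrightarrow> polytope K \<and> aff_dim K = 3"

definition poly_vertices :: "(real^3) set \<Rightarrow> (real^3) set" where
  "poly_vertices K = {v. {v} face_of K}"

definition poly_edges :: "(real^3) set \<Rightarrow> (real^3) set set" where
  "poly_edges K = {e. e face_of K \<and> aff_dim e = 1}"

definition poly_faces :: "(real^3) set \<Rightarrow> (real^3) set set" where
  "poly_faces K = {F. F face_of K \<and> aff_dim F = 2}"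

definition nondeg_affine :: "(real^3 \<Rightarrow> real^3) \<Rightarrow> bool" where
  "nondeg_affine g \<longleftrightarrow> (\<exists>L c. linear L \<and> bij L \<and> g = (\<lambda>x. L x + c))"

definition comb_equiv ::
  "(real^3) set \<Rightarrow> (real^3) set \<Rightarrow> (real^3 \<Rightarrow> real^3) \<Rightarrow>
   ((real^3) set \<Rightarrow> (real^3) set) \<Rightarrow> ((real^3) set \<Rightarrow> (real^3) set) \<Rightarrow> bool" where
  "comb_equiv K K' fv fe ff \<longleftrightarrow>
     bij_betw fv (poly_vertices K) (poly_vertices K') \<and>
     bij_betw fe (poly_edges K) (poly_edges K') \<and>
     bij_betw ff (poly_faces K) (poly_faces K') \<and>
     (\<forall>v\<in>poly_vertices K. \<forall>e\<in>poly_edges K. v \<in> e \<longleftrightarrow> fv v \<in> fe e) \<and>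
     (\<forall>v\<in>poly_vertices K. \<forall>F\<in>poly_faces K. v \<in> F \<longleftrightarrow> fv v \<in> ff F) \<and>
     (\<forall>e\<in>poly_edges K. \<forall>F\<in>poly_faces K. e \<subseteq> F \<longleftrightarrow> fe e \<subseteq> ff F)"

text \<open>A nondegenerate affine map between
the two planes extends to a nondegenerate affine map of R^3.\<close>
definition faces_affine_equiv ::
  "(real^3) set \<Rightarrow> (real^3 \<Rightarrow> real^3) \<Rightarrow> ((real^3) set \<Rightarrow> (real^3) set) \<Rightarrow>
   (real^3) set \<Rightarrow> (real^3) set \<Rightarrow> bool" where
  "faces_affine_equiv K fv fe F F' \<longleftrightarrow>
     (\<exists>g. nondeg_affine g \<and> g ` F = F' \<and>
        (\<forall>v\<in>poly_vertices K. v \<in> F \<longrightarrow> g v = fv v) \<and>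
        (\<forall>e\<in>poly_edges K. e \<subseteq> F \<longrightarrow> g ` e = fe e))"

definition polys_affine_equiv ::
  "(real^3) set \<Rightarrow> (real^3) set \<Rightarrow> (real^3 \<Rightarrow> real^3) \<Rightarrow>
   ((real^3) set \<Rightarrow> (real^3) set) \<Rightarrow> ((real^3) set \<Rightarrow> (real^3) set) \<Rightarrow> bool" where
  "polys_affine_equiv K K' fv fe ff \<longleftrightarrow>
     (\<exists>g. nondeg_affine g \<and> g ` K = K' \<and>
        (\<forall>v\<in>poly_vertices K. g v = fv v) \<and>
        (\<forall>e\<in>poly_edges K. g ` e = fe e) \<and>
        (\<forall>F\<in>poly_faces K. g ` F = ff F))"

definition edge_path :: "(real^3) set \<Rightarrow> (real^3) list \<Rightarrow> bool" where
  "edge_path K \<gamma> \<longleftrightarrow> \<gamma> \<noteq> [] \<and> set \<gamma> \<subseteq> poly_vertices K \<and>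
     (\<forall>i. Suc i < length \<gamma> \<longrightarrow> closed_segment (\<gamma> ! i) (\<gamma> ! Suc i) \<in> poly_edges K)"

end

theory Submission
  imports Defs
begin

text \<open>Let v be a vertex of the path and w_1, w_2, w_3 its neighbours. Every face through v
contains two of the three edges at v, so its plane is spanned by v and two of the w_i; as two
distinct faces through v already span space, v, w_1, w_2, w_3 are affinely independent. Hence
some affine map sends them to their partners in P', and it agrees with the given affine
equivalence of each face through v, since both are affine and agree on three non-collinear
points of that face. For adjacent path vertices these local maps agree on the two faces
containing the connecting edge, which span space, so all local maps coincide. Since every face
meets the path, this single affine map restricts to the given map on every face; it therefore
maps vertices onto vertices, hence P onto P', and is nondegenerate because P' is solid.\<close>

section \<open>Affine maps\<close>

definition affine_map :: "('a::real_vector \<Rightarrow> 'b::real_vector) \<Rightarrow> bool" where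
  "affine_map G \<longleftrightarrow> (\<exists>L c. linear L \<and> G = (\<lambda>x. L x + c))"

lemma affine_mapE:
  assumes "affine_map G"
  obtains L c where "linear L" "G = (\<lambda>x. L x + c)"
  using assms unfolding affine_map_def by blast

lemma affine_mapI: "linear L \<Longrightarrow> affine_map (\<lambda>x. L x + c)"
  unfolding affine_map_def by blast

lemma affine_map_affine_comb:
  assumes "affine_map G" "u + w = 1"
  shows "G (u *\<^sub>R x + w *\<^sub>R y) = u *\<^sub>R G x + w *\<^sub>R G y"
proof -
  obtain L c where L: "linear L" "G = (\<lambda>x. L x + c)"
    using assms(1) by (rule affine_mapE)
  have "c = u *\<^sub>R c + w *\<^sub>R c"
    using assms(2) by (metis scaleR_add_left scaleR_one)
  then show ?thesis
    using L by (simp add: linear_add linear_scale algebra_simps)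
qed

lemma affine_map_eq_on_affine_hull:
  assumes "affine_map G" "affine_map H" "\<And>x. x \<in> S \<Longrightarrow> G x = H x" "x \<in> affine hull S"
  shows "G x = H x"
proof -
  have "affine {x. G x = H x}"
    unfolding affine_def
    using affine_map_affine_comb[OF assms(1)] affine_map_affine_comb[OF assms(2)] by auto
  then have "affine hull S \<subseteq> {x. G x = H x}"
    using assms(3) by (intro hull_minimal) auto
  then show ?thesis
    using assms(4) by auto
qed

lemma nondeg_affine_imp_affine_map: "nondeg_affine g \<Longrightarrow> affine_map g"
  unfolding nondeg_affine_def affine_map_def by blast

lemma affine_map_image_convex_hull:
  assumes "affine_map G"
  shows "G ` (convex hull S) = convex hull (G ` S)"
proof -
  obtain L c where L: "linear L" "G = (\<lambda>x. L x + c)"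
    using assms by (rule affine_mapE)
  then have image: "G ` T = (+) c ` L ` T" for T
    by (auto simp: image_image add.commute)
  show ?thesis
    by (simp only: image convex_hull_linear_image[OF L(1)] convex_hull_translation)
qed

lemma affine_map_interpolating_affine_independent:
  fixes f :: "'a::euclidean_space \<Rightarrow> 'b::real_vector"
  assumes "\<not> affine_dependent S"
  obtains G where "affine_map G" "\<And>x. x \<in> S \<Longrightarrow> G x = f x"
proof (cases "S = {}")
  case True
  from affine_mapI[OF linear_zero] show ?thesis
    using that True by blast
next
  case False
  then obtain a T where S: "S = insert a T" "a \<notin> T"
    by (metis Set.set_insert ex_in_conv)
  have "independent ((\<lambda>x. -a + x) ` T)"
    using assms affine_dependent_iff_dependent[OF S(2)] S(1) by simp
  then obtain L where L: "linear L" "\<forall>y \<in> (\<lambda>x. -a + x) ` T. L y = f (a + y) - f a"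
    using linear_independent_extend[of _ "\<lambda>y. f (a + y) - f a"] by blast
  have "affine_map (\<lambda>x. L x + (f a - L a))"
    using L(1) by (rule affine_mapI)
  moreover have "L x + (f a - L a) = f x" if "x \<in> S" for x
  proof (cases "x = a")
    case False
    then have "L x - L a = f x - f a"
      using L(2) S that linear_diff[OF L(1), of x a] by auto
    then show ?thesis
      by (simp add: algebra_simps)
  qed simp
  ultimately show ?thesis
    using that by blast
qed

lemma affine_map_full_image_imp_nondeg:
  fixes G :: "real^3 \<Rightarrow> real^3"
  assumes "affine_map G" "aff_dim (G ` S) = 3"
  shows "nondeg_affine G"
proof -
  obtain L c where L: "linear L" "G = (\<lambda>x. L x + c)"
    using assms(1) by (rule affine_mapE)
  have "G ` S \<subseteq> (+) c ` range L"
    using L(2) by (auto simp: add.commute)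
  then have "aff_dim (G ` S) \<le> aff_dim ((+) c ` range L)"
    by (rule aff_dim_subset)
  then have "3 \<le> aff_dim (range L)"
    using assms(2) by (simp add: aff_dim_translation_eq)
  moreover have subspace: "subspace (range L)"
    using L(1) by (simp add: linear_subspace_image)
  ultimately have "dim (range L) = DIM(real^3)"
    using aff_dim_subspace[OF subspace] dim_subset_UNIV[of "range L"] by simp
  then have "surj L"
    using dim_eq_full[of "range L"] span_eq_iff[of "range L"] subspace by simp
  then have "bij L"
    using linear_surjective_imp_injective[OF L(1)] by (simp add: bij_def)
  then show ?thesis
    unfolding nondeg_affine_def using L by blast
qed

section \<open>Faces, edges and vertices of a solid polytope\<close>

lemma closed_convex_polyhedronD:
  assumes "closed_convex_polyhedron K"
  shows "polytope K" "polyhedron K" "convex K" "compact K" "aff_dim K = 3"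
  using assms unfolding closed_convex_polyhedron_def
  by (auto simp: polytope_imp_polyhedron polytope_imp_convex polytope_imp_compact)

lemma polyhedron_face_in_two_facets:
  fixes S :: "'a::euclidean_space set"
  assumes "polyhedron S" "C face_of S" "C \<noteq> {}" "aff_dim C < aff_dim S - 1"
  obtains F1 F2 where "F1 facet_of S" "F2 facet_of S" "F1 \<noteq> F2" "C \<subseteq> F1" "C \<subseteq> F2"
proof -
  let ?A = "{F. F facet_of S \<and> C \<subseteq> F}"
  have "C \<noteq> S"
    using assms(4) by auto
  then have C: "C = \<Inter>?A"
    by (rule face_of_polyhedron[OF assms(1-3)])
  have "?A \<noteq> {}"
  proof
    assume "?A = {}"
    then have "C = UNIV"
      by (metis C Inter_empty)
    then show False
      using face_of_imp_subset[OF assms(2)] \<open>C \<noteq> S\<close> by auto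
  qed
  then obtain F1 where F1: "F1 facet_of S" "C \<subseteq> F1"
    by blast
  then have "C \<noteq> F1"
    using assms(4) by (auto simp: facet_of_def)
  then have "?A \<noteq> {F1}"
    by (metis C cInf_singleton)
  then obtain F2 where "F2 facet_of S" "C \<subseteq> F2" "F2 \<noteq> F1"
    using F1 by blast
  then show ?thesis
    using that F1 by blast
qed

lemma poly_faces_eq_facets:
  assumes "closed_convex_polyhedron K"
  shows "poly_faces K = {F. F facet_of K}"
  using closed_convex_polyhedronD[OF assms]
  by (auto simp: facet_of_def poly_faces_def aff_dim_empty[symmetric])

lemma poly_edge_in_two_faces:
  assumes "closed_convex_polyhedron K" "e \<in> poly_edges K"
  obtains F1 F2 where "F1 \<in> poly_faces K" "F2 \<in> poly_faces K" "F1 \<noteq> F2" "e \<subseteq> F1" "e \<subseteq> F2"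
proof -
  have e: "e face_of K" "aff_dim e = 1"
    using assms(2) by (auto simp: poly_edges_def)
  then have "e \<noteq> {}"
    by (metis aff_dim_empty one_neq_neg_one)
  then show ?thesis
    using polyhedron_face_in_two_facets[of K e] e closed_convex_polyhedronD[OF assms(1)]
      poly_faces_eq_facets[OF assms(1)] that by auto
qed

lemma poly_vertex_in_two_faces:
  assumes "closed_convex_polyhedron K" "v \<in> poly_vertices K"
  obtains F1 F2 where "F1 \<in> poly_faces K" "F2 \<in> poly_faces K" "F1 \<noteq> F2" "v \<in> F1" "v \<in> F2"
  using polyhedron_face_in_two_facets[of K "{v}"] assms closed_convex_polyhedronD[OF assms(1)]
    poly_faces_eq_facets[OF assms(1)] that by (auto simp: poly_vertices_def)

lemma affine_hull_Un_distinct_poly_faces: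
  assumes "closed_convex_polyhedron K" "F1 \<in> poly_faces K" "F2 \<in> poly_faces K" "F1 \<noteq> F2"
  shows "affine hull (F1 \<union> F2) = UNIV"
proof (rule ccontr)
  assume "affine hull (F1 \<union> F2) \<noteq> UNIV"
  then have "aff_dim (F1 \<union> F2) \<le> 2"
    using aff_dim_eq_full[of "F1 \<union> F2"] aff_dim_le_DIM[of "F1 \<union> F2"] by simp
  moreover have "aff_dim F1 = 2" "aff_dim F2 = 2"
    using assms(2,3) by (auto simp: poly_faces_def)
  ultimately have "aff_dim F1 = aff_dim (F1 \<union> F2)" "aff_dim F2 = aff_dim (F1 \<union> F2)"
    using aff_dim_subset[of F1 "F1 \<union> F2"] aff_dim_subset[of F2 "F1 \<union> F2"] by auto
  then have "affine hull F1 = affine hull F2"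
    using aff_dim_eq_full_gen[of F1 "F1 \<union> F2"] aff_dim_eq_full_gen[of F2 "F1 \<union> F2"] by auto
  moreover have "F1 face_of K" "F2 face_of K"
    using assms(2,3) by (auto simp: poly_faces_def)
  ultimately have "F1 = F2"
    using face_of_imp_eq_affine_Int closed_convex_polyhedronD(3)[OF assms(1)] by metis
  then show False
    using assms(4) by simp
qed

definition poly_neighbours :: "(real^3) set \<Rightarrow> real^3 \<Rightarrow> (real^3) set" where
  "poly_neighbours K v = {w. w \<noteq> v \<and> closed_segment v w \<in> poly_edges K}"

lemma poly_neighbours_subset_vertices: "poly_neighbours K v \<subseteq> poly_vertices K"
proof
  fix w
  assume "w \<in> poly_neighbours K v"
  then have "closed_segment v w face_of K"
    by (simp add: poly_neighbours_def poly_edges_def)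
  moreover have "{w} face_of closed_segment v w"
    by (simp add: face_of_singleton extreme_point_of_segment)
  ultimately show "w \<in> poly_vertices K"
    by (auto simp: poly_vertices_def intro: face_of_trans)
qed

lemma vertex_face_of_face:
  assumes "v \<in> poly_vertices K" "F face_of K" "v \<in> F"
  shows "{v} face_of F"
  using assms face_of_subset[of "{v}" K F] face_of_imp_subset[OF assms(2)]
  by (simp add: poly_vertices_def)

lemma inj_on_closed_segment_poly_neighbours: "inj_on (closed_segment v) (poly_neighbours K v)"
  unfolding inj_on_def poly_neighbours_def
  by (metis extreme_point_of_segment)

lemma poly_edges_at_vertex:
  assumes K: "closed_convex_polyhedron K" and v: "v \<in> poly_vertices K"
  shows "{e \<in> poly_edges K. v \<in> e} = closed_segment v ` poly_neighbours K v"
proof (intro equalityI subsetI)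
  fix e
  assume "e \<in> {e \<in> poly_edges K. v \<in> e}"
  then have e: "e face_of K" "aff_dim e = 1" "v \<in> e"
    by (auto simp: poly_edges_def)
  then have "compact e" "convex e" "collinear e"
    using closed_convex_polyhedronD[OF K] face_of_imp_compact face_of_imp_convex
    by (auto simp: collinear_aff_dim)
  then obtain a b where ab: "e = closed_segment a b"
    using compact_convex_collinear_segment e(3) by blast
  have "{v} face_of e"
    using vertex_face_of_face[OF v e(1,3)] .
  then have "v = a \<or> v = b"
    by (simp add: ab face_of_singleton extreme_point_of_segment)
  then obtain w where w: "e = closed_segment v w"
    using ab closed_segment_commute by metis
  moreover have "w \<noteq> v"
    using w e(2) by auto
  ultimately show "e \<in> closed_segment v ` poly_neighbours K v"
    using e by (auto simp: poly_neighbours_def poly_edges_def)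
qed (auto simp: poly_neighbours_def)

lemma poly_neighbours_not_collinear:
  assumes K: "closed_convex_polyhedron K"
    and ab: "a \<in> poly_neighbours K v" "b \<in> poly_neighbours K v" "a \<noteq> b"
  shows "\<not> collinear {v, a, b}"
proof
  assume "collinear {v, a, b}"
  then have "b \<in> affine hull (closed_segment v a)"
    using collinear_3_affine_hull[of v a b] ab(1) by (auto simp: poly_neighbours_def)
  moreover have edge: "closed_segment v a face_of K"
    using ab(1) by (simp add: poly_neighbours_def poly_edges_def)
  moreover have vertex: "b \<in> poly_vertices K"
    using ab(2) poly_neighbours_subset_vertices by blast
  ultimately have "b \<in> closed_segment v a"
    using face_of_imp_eq_affine_Int[OF closed_convex_polyhedronD(3)[OF K] edge]
    by (auto simp: poly_vertices_def dest: face_of_imp_subset)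
  then have "{b} face_of closed_segment v a"
    by (rule vertex_face_of_face[OF vertex edge])
  then have "b = v \<or> b = a"
    by (simp add: face_of_singleton extreme_point_of_segment)
  then show False
    using ab by (auto simp: poly_neighbours_def)
qed

lemma poly_face_affine_hull_at_vertex:
  assumes K: "closed_convex_polyhedron K" and F: "F \<in> poly_faces K"
    and v: "v \<in> poly_vertices K" "v \<in> F"
  obtains a b where "a \<in> poly_neighbours K v" "b \<in> poly_neighbours K v" "a \<in> F" "b \<in> F"
    "affine hull F = affine hull {v, a, b}"
proof -
  have F': "F face_of K" "aff_dim F = 2"
    using F by (auto simp: poly_faces_def)
  have "polyhedron F"
    using face_of_polytope_polytope[OF closed_convex_polyhedronD(1)[OF K] F'(1)]
    by (rule polytope_imp_polyhedron)
  moreover have "{v} face_of F"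
    using vertex_face_of_face[OF v(1) F'(1) v(2)] .
  moreover have "aff_dim {v} < aff_dim F - 1"
    using F'(2) by simp
  ultimately obtain E1 E2 where E: "E1 facet_of F" "E2 facet_of F" "E1 \<noteq> E2" "{v} \<subseteq> E1" "{v} \<subseteq> E2"
    using polyhedron_face_in_two_facets[OF _ _ insert_not_empty] by blast
  then have "E1 \<in> {e \<in> poly_edges K. v \<in> e}" "E2 \<in> {e \<in> poly_edges K. v \<in> e}"
    using F' by (auto simp: facet_of_def poly_edges_def intro: face_of_trans)
  then obtain a b where ab: "a \<in> poly_neighbours K v" "b \<in> poly_neighbours K v"
    "E1 = closed_segment v a" "E2 = closed_segment v b"
    unfolding poly_edges_at_vertex[OF K v(1)] by blast
  have "a \<in> F" "b \<in> F"
    using ab(3,4) E(1,2) facet_of_imp_subset by auto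
  have "card {v, a, b} \<le> 3"
    by (simp add: card_insert_if)
  then have "aff_dim {v, a, b} \<le> 2"
    using aff_dim_le_card[of "{v, a, b}"] by simp
  moreover have "\<not> collinear {v, a, b}"
    using poly_neighbours_not_collinear[OF K ab(1,2)] ab(3,4) E(3) by blast
  ultimately have "aff_dim {v, a, b} = aff_dim F"
    using F'(2) collinear_aff_dim[of "{v, a, b}"] by simp
  then have "affine hull F = affine hull {v, a, b}"
    using aff_dim_eq_full_gen[of "{v, a, b}" F] v(2) \<open>a \<in> F\<close> \<open>b \<in> F\<close> by auto
  then show ?thesis
    using that ab(1,2) \<open>a \<in> F\<close> \<open>b \<in> F\<close> by blast
qed

section \<open>Gluing the face maps\<close>

lemma simple_vertex_affine_independent:
  assumes K: "closed_convex_polyhedron K" and v: "v \<in> poly_vertices K"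
    and simple: "card {e \<in> poly_edges K. v \<in> e} = 3"
  shows "\<not> affine_dependent (insert v (poly_neighbours K v))"
proof -
  let ?N = "poly_neighbours K v"
  have inj: "inj_on (closed_segment v) ?N"
    by (rule inj_on_closed_segment_poly_neighbours)
  have card_edges: "card (closed_segment v ` ?N) = 3"
    using simple poly_edges_at_vertex[OF K v] by simp
  then have "finite (closed_segment v ` ?N)"
    by (intro card_ge_0_finite) simp
  then have N: "finite ?N" "card ?N = 3"
    using finite_imageD[OF _ inj] card_image[OF inj] card_edges by simp_all
  have "v \<notin> ?N"
    by (simp add: poly_neighbours_def)
  then have card: "card (insert v ?N) = 4"
    using N by simp
  have face_subset: "F \<subseteq> affine hull (insert v ?N)" if F: "F \<in> poly_faces K" "v \<in> F" for F
  proof -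
    obtain a b where ab: "a \<in> ?N" "b \<in> ?N" "a \<in> F" "b \<in> F" "affine hull F = affine hull {v, a, b}"
      using poly_face_affine_hull_at_vertex[OF K F(1) v F(2)] .
    have "F \<subseteq> affine hull {v, a, b}"
      using hull_subset[of F affine] unfolding ab(5) .
    also have "\<dots> \<subseteq> affine hull (insert v ?N)"
      using ab(1,2) by (intro hull_mono) blast
    finally show ?thesis .
  qed
  obtain F1 F2 where F: "F1 \<in> poly_faces K" "F2 \<in> poly_faces K" "F1 \<noteq> F2" "v \<in> F1" "v \<in> F2"
    using poly_vertex_in_two_faces[OF K v] .
  then have "F1 \<union> F2 \<subseteq> affine hull (insert v ?N)"
    using face_subset by blast
  then have "affine hull (F1 \<union> F2) \<subseteq> affine hull (insert v ?N)"
    by (rule hull_minimal) (rule affine_affine_hull)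
  then have "affine hull (insert v ?N) = UNIV"
    using affine_hull_Un_distinct_poly_faces[OF K F(1-3)] by blast
  then have "aff_dim (insert v ?N) = 3"
    using aff_dim_eq_full[of "insert v ?N"] by simp
  then show ?thesis
    unfolding affine_independent_iff_card using N card by simp
qed

lemma simple_vertex_affine_map:
  assumes K: "closed_convex_polyhedron K" and v: "v \<in> poly_vertices K"
    and simple: "card {e \<in> poly_edges K. v \<in> e} = 3"
    and g: "\<And>F. F \<in> poly_faces K \<Longrightarrow> affine_map (g F)"
      "\<And>F u. F \<in> poly_faces K \<Longrightarrow> u \<in> poly_vertices K \<Longrightarrow> u \<in> F \<Longrightarrow> g F u = fv u"
  obtains G where "affine_map G"
    "\<And>F x. F \<in> poly_faces K \<Longrightarrow> v \<in> F \<Longrightarrow> x \<in> F \<Longrightarrow> G x = g F x"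
proof -
  obtain G where G: "affine_map G" "\<And>u. u \<in> insert v (poly_neighbours K v) \<Longrightarrow> G u = fv u"
    using affine_map_interpolating_affine_independent[OF simple_vertex_affine_independent[OF K v simple]]
    by blast
  have "G x = g F x" if F: "F \<in> poly_faces K" "v \<in> F" and x: "x \<in> F" for F x
  proof -
    obtain a b where ab: "a \<in> poly_neighbours K v" "b \<in> poly_neighbours K v" "a \<in> F" "b \<in> F"
      "affine hull F = affine hull {v, a, b}"
      using poly_face_affine_hull_at_vertex[OF K F(1) v F(2)] .
    have "G u = g F u" if u: "u \<in> {v, a, b}" for u
    proof -
      have "u \<in> insert v (poly_neighbours K v)" "u \<in> F"
        using u ab(1-4) F(2) by auto
      moreover have "u \<in> poly_vertices K"
        using u v ab(1,2) poly_neighbours_subset_vertices by auto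
      ultimately show ?thesis
        using G(2) g(2)[OF F(1)] by simp
    qed
    moreover have "x \<in> affine hull {v, a, b}"
      using hull_inc[OF x, where P = affine] ab(5) by simp
    ultimately show ?thesis
      by (rule affine_map_eq_on_affine_hull[OF G(1) g(1)[OF F(1)]])
  qed
  then show ?thesis
    by (rule that[OF G(1)])
qed

lemma face_map_extensions_agree_along_edge:
  assumes K: "closed_convex_polyhedron K" and e: "closed_segment u v \<in> poly_edges K"
    and G: "affine_map G" "\<And>F x. F \<in> poly_faces K \<Longrightarrow> u \<in> F \<Longrightarrow> x \<in> F \<Longrightarrow> G x = g F x"
    and H: "affine_map H" "\<And>F x. F \<in> poly_faces K \<Longrightarrow> v \<in> F \<Longrightarrow> x \<in> F \<Longrightarrow> H x = g F x"
  shows "G = H"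
proof
  fix x
  obtain F1 F2 where F: "F1 \<in> poly_faces K" "F2 \<in> poly_faces K" "F1 \<noteq> F2"
    "closed_segment u v \<subseteq> F1" "closed_segment u v \<subseteq> F2"
    using poly_edge_in_two_faces[OF K e] .
  then have "u \<in> F1" "v \<in> F1" "u \<in> F2" "v \<in> F2"
    by auto
  then have "G y = H y" if "y \<in> F1 \<union> F2" for y
    using that G(2) H(2) F(1,2) by auto
  moreover have "x \<in> affine hull (F1 \<union> F2)"
    using affine_hull_Un_distinct_poly_faces[OF K F(1-3)] by simp
  ultimately show "G x = H x"
    by (rule affine_map_eq_on_affine_hull[OF G(1) H(1)])
qed

lemma face_maps_glue_along_simple_edge_path:
  assumes K: "closed_convex_polyhedron K"
    and g: "\<And>F. F \<in> poly_faces K \<Longrightarrow> affine_map (g F)"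
      "\<And>F u. F \<in> poly_faces K \<Longrightarrow> u \<in> poly_vertices K \<Longrightarrow> u \<in> F \<Longrightarrow> g F u = fv u"
    and path: "edge_path K \<gamma>"
    and simple: "\<forall>v\<in>set \<gamma>. card {e \<in> poly_edges K. v \<in> e} = 3"
  obtains G where "affine_map G"
    "\<And>F v x. F \<in> poly_faces K \<Longrightarrow> v \<in> set \<gamma> \<Longrightarrow> v \<in> F \<Longrightarrow> x \<in> F \<Longrightarrow> G x = g F x"
proof -
  have \<gamma>: "\<gamma> \<noteq> []" "set \<gamma> \<subseteq> poly_vertices K"
    "\<And>i. Suc i < length \<gamma> \<Longrightarrow> closed_segment (\<gamma> ! i) (\<gamma> ! Suc i) \<in> poly_edges K"
    using path unfolding edge_path_def by auto
  define extends_at where "extends_at H i \<longleftrightarrow> affine_map H \<and>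
    (\<forall>F\<in>poly_faces K. \<gamma> ! i \<in> F \<longrightarrow> (\<forall>x\<in>F. H x = g F x))" for H i
  have local: "\<exists>H. extends_at H i" if "i < length \<gamma>" for i
  proof -
    have "\<gamma> ! i \<in> poly_vertices K" "card {e \<in> poly_edges K. \<gamma> ! i \<in> e} = 3"
      using that \<gamma>(2) simple nth_mem by auto
    then obtain H where "affine_map H"
      "\<And>F x. F \<in> poly_faces K \<Longrightarrow> \<gamma> ! i \<in> F \<Longrightarrow> x \<in> F \<Longrightarrow> H x = g F x"
      using simple_vertex_affine_map[where g = g and fv = fv, OF K _ _ g] by blast
    then show ?thesis
      unfolding extends_at_def by blast
  qed
  obtain G where G: "extends_at G 0"
    using local[of 0] \<gamma>(1) by blast
  have "extends_at G i" if "i < length \<gamma>" for i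
    using that
  proof (induction i)
    case (Suc i)
    obtain H where H: "extends_at H (Suc i)"
      using local[OF Suc.prems] by blast
    have "G = H"
      using face_map_extensions_agree_along_edge[OF K \<gamma>(3)[OF Suc.prems], of G g H]
        Suc H unfolding extends_at_def by simp
    then show ?case
      using H by simp
  qed (use G in simp)
  then show ?thesis
    using that G unfolding extends_at_def by (metis in_set_conv_nth)
qed

lemma convex_hull_poly_vertices:
  assumes "closed_convex_polyhedron K"
  shows "convex hull (poly_vertices K) = K"
  using Krein_Milman_Minkowski[of K] closed_convex_polyhedronD[OF assms]
  by (simp add: poly_vertices_def face_of_singleton)

lemma polys_affine_equiv_if_extends_face_maps:
  assumes K: "closed_convex_polyhedron K" and K': "closed_convex_polyhedron K'"
    and comb: "comb_equiv K K' fv fe ff"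
    and G: "affine_map G" "\<And>F x. F \<in> poly_faces K \<Longrightarrow> x \<in> F \<Longrightarrow> G x = g F x"
    and g_face: "\<And>F. F \<in> poly_faces K \<Longrightarrow> g F ` F = ff F"
    and g_vertex: "\<And>F v. F \<in> poly_faces K \<Longrightarrow> v \<in> poly_vertices K \<Longrightarrow> v \<in> F \<Longrightarrow> g F v = fv v"
    and g_edge: "\<And>F e. F \<in> poly_faces K \<Longrightarrow> e \<in> poly_edges K \<Longrightarrow> e \<subseteq> F \<Longrightarrow> g F ` e = fe e"
  shows "polys_affine_equiv K K' fv fe ff"
proof -
  have G_face: "G ` F = ff F" if F: "F \<in> poly_faces K" for F
    using G(2)[OF F] g_face[OF F] by simp
  have G_vertex: "G v = fv v" if v: "v \<in> poly_vertices K" for v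
  proof -
    obtain F F' where "F \<in> poly_faces K" "F' \<in> poly_faces K" "F \<noteq> F'" "v \<in> F" "v \<in> F'"
      using poly_vertex_in_two_faces[OF K v] .
    then show ?thesis
      using G(2) g_vertex v by simp
  qed
  have G_edge: "G ` e = fe e" if e: "e \<in> poly_edges K" for e
  proof -
    obtain F F' where F: "F \<in> poly_faces K" "F' \<in> poly_faces K" "F \<noteq> F'" "e \<subseteq> F" "e \<subseteq> F'"
      using poly_edge_in_two_faces[OF K e] .
    then have "G ` e = g F ` e"
      using G(2) by (auto intro!: image_cong)
    then show ?thesis
      using g_edge[OF F(1) e F(4)] by simp
  qed
  have "G ` poly_vertices K = fv ` poly_vertices K"
    by (rule image_cong[OF refl G_vertex])
  also have "\<dots> = poly_vertices K'"
    using comb unfolding comb_equiv_def by (intro bij_betw_imp_surj_on) (rule conjunct1)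
  finally have "G ` K = K'"
    using affine_map_image_convex_hull[OF G(1), of "poly_vertices K"]
      convex_hull_poly_vertices[OF K] convex_hull_poly_vertices[OF K'] by simp
  moreover have "nondeg_affine G"
    using affine_map_full_image_imp_nondeg[OF G(1), of K] calculation closed_convex_polyhedronD(5)[OF K']
    by simp
  ultimately show ?thesis
    unfolding polys_affine_equiv_def by (intro exI[of _ G]) (simp add: G_vertex G_edge G_face)
qed

lemma faces_affine_equivE:
  assumes "\<forall>F\<in>poly_faces K. faces_affine_equiv K fv fe F (ff F)"
  obtains g where "\<And>F. F \<in> poly_faces K \<Longrightarrow> nondeg_affine (g F)"
    "\<And>F. F \<in> poly_faces K \<Longrightarrow> g F ` F = ff F"
    "\<And>F v. F \<in> poly_faces K \<Longrightarrow> v \<in> poly_vertices K \<Longrightarrow> v \<in> F \<Longrightarrow> g F v = fv v"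
    "\<And>F e. F \<in> poly_faces K \<Longrightarrow> e \<in> poly_edges K \<Longrightarrow> e \<subseteq> F \<Longrightarrow> g F ` e = fe e"
proof -
  obtain g where "\<forall>F\<in>poly_faces K. nondeg_affine (g F) \<and> g F ` F = ff F \<and>
      (\<forall>v\<in>poly_vertices K. v \<in> F \<longrightarrow> g F v = fv v) \<and>
      (\<forall>e\<in>poly_edges K. e \<subseteq> F \<longrightarrow> g F ` e = fe e)"
    using bchoice[OF assms[unfolded faces_affine_equiv_def]] by blast
  then show ?thesis
    using that[of g] by blast
qed

theorem theorem5:
  fixes K K' :: "(real^3) set"
    and fv :: "real^3 \<Rightarrow> real^3"
    and fe ff :: "(real^3) set \<Rightarrow> (real^3) set"
    and \<gamma> :: "(real^3) list"
  assumes "closed_convex_polyhedron K" and "closed_convex_polyhedron K'"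
    and "comb_equiv K K' fv fe ff"
    and "\<forall>F\<in>poly_faces K. faces_affine_equiv K fv fe F (ff F)"
    and "edge_path K \<gamma>"
    and "\<forall>v\<in>set \<gamma>. card {e\<in>poly_edges K. v \<in> e} = 3"
    and "\<forall>F\<in>poly_faces K. \<exists>v\<in>set \<gamma>. v \<in> F"
  shows "polys_affine_equiv K K' fv fe ff"
proof -
  obtain g where g_nondeg: "\<And>F. F \<in> poly_faces K \<Longrightarrow> nondeg_affine (g F)"
    and g_face: "\<And>F. F \<in> poly_faces K \<Longrightarrow> g F ` F = ff F"
    and g_vertex: "\<And>F v. F \<in> poly_faces K \<Longrightarrow> v \<in> poly_vertices K \<Longrightarrow> v \<in> F \<Longrightarrow> g F v = fv v"
    and g_edge: "\<And>F e. F \<in> poly_faces K \<Longrightarrow> e \<in> poly_edges K \<Longrightarrow> e \<subseteq> F \<Longrightarrow> g F ` e = fe e"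
    using faces_affine_equivE[OF assms(4)] by blast
  obtain G where G: "affine_map G"
    "\<And>F v x. F \<in> poly_faces K \<Longrightarrow> v \<in> set \<gamma> \<Longrightarrow> v \<in> F \<Longrightarrow> x \<in> F \<Longrightarrow> G x = g F x"
    using face_maps_glue_along_simple_edge_path[where g = g and fv = fv, OF assms(1)
        nondeg_affine_imp_affine_map[OF g_nondeg] g_vertex assms(5,6)] by blast
  have "G x = g F x" if "F \<in> poly_faces K" "x \<in> F" for F x
    using G(2) assms(7) that by blast
  from assms(1-3) G(1) this g_face g_vertex g_edge show ?thesis
    by (rule polys_affine_equiv_if_extends_face_maps)
qed

end
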